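(* For any $F\in\mathscr{F}_{\mathrm{opt}}\cap\mathscr{F}_1$, $i\in\mathcal{R}_F$ and $s\in\mathcal{S}$, if $\bar{\mathcal{P}}^0_{F,i}(f_i(s))=\emptyset$ and $|\mathcal{S}_{F,i}(f_i(s))|=1$, then $|\mathcal{P}^2_{F,\tau_i(s)}|=4$.
   Context: $\mathcal{S}$ is a finite source alphabet with $|\mathcal{S}|\ge 2$ and $\mathcal{C}=\{0,1\}$; $\mathcal{A}^k,\mathcal{A}^{\ast},\mathcal{A}^{+}$ are sequences of length $k$, finite, positive finite length; $\lambda$ empty sequence; $\preceq$ prefix, $\prec$ proper prefix; $\mathrm{suff}(x_1\cdots x_n)=x_2\cdots x_n$. A code-tuple $F$ with $m\ge1$ code tables consists of maps $f_i:\mathcal{S}\to\mathcal{C}^{\ast}$ and $\tau_i:\mathcal{S}\to\{0,\dots,m-1\}$, $i\in[F]=\{0,\dots,m-1\}$; $|F|=m$. $f_i^{\ast}(\lambda)=\lambda$, $\tau_i^{\ast}(\lambda)=i$, and for $\pmb{x}=x_1\cdots x_n\ne\lambda$, $f_i^{\ast}(\pmb{x})=f_i(x_1)f^{\ast}_{\tau_i(x_1)}(\mathrm{suff}(\pmb{x}))$, $\tau_i^{\ast}(\pmb{x})=\tau^{\ast}_{\tau_i(x_1)}(\mathrm{suff}(\pmb{x}))$. $\mathcal{S}_{F,i}(\pmb{b})=\{s:f_i(s)=\pmb{b}\}$. For integer $k\ge0$, $\pmb{b}\in\mathcal{C}^{\ast}$: $\mathcal{P}^k_{F,i}(\pmb{b})$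 is the set of $\pmb{c}\in\mathcal{C}^k$ such that some $\pmb{x}=x_1\cdots x_n\in\mathcal{S}^{+}$ has $f_i^{\ast}(\pmb{x})\succeq\pmb{b}\pmb{c}$ and $f_i(x_1)\succeq\pmb{b}$; $\bar{\mathcal{P}}^k_{F,i}(\pmb{b})$ the same with $f_i(x_1)\succ\pmb{b}$; $\mathcal{P}^k_{F,i}=\mathcal{P}^k_{F,i}(\lambda)$. $F\in\mathscr{F}_{2\text{-}\mathrm{dec}}$ if $\mathcal{P}^2_{F,\tau_i(s)}\cap\bar{\mathcal{P}}^2_{F,i}(f_i(s))=\emptyset$ for all $i,s$, and $\mathcal{P}^2_{F,\tau_i(s)}\cap\mathcal{P}^2_{F,\tau_i(s')}=\emptyset$ whenever $s\ne s'$, $f_i(s)=f_i(s')$. $F\in\mathscr{F}_{\mathrm{ext}}$ if $\mathcal{P}^1_{F,i}\ne\emptyset$ for all $i$. Fix $\mu:\mathcal{S}\to(0,1]$ with $\sum_s\mu(s)=1$; $Q(F)$ has entries $Q_{i,j}(F)=\sum_{s:\tau_i(s)=j}\mu(s)$; $F\in\mathscr{F}_{\mathrm{reg}}$ if $\pmb{\pi}Q(F)=\pmb{\pi}$, $\sum_i\pi_i=1$ has a unique solution $\pmb{\pi}(F)$; then $L(F)=\sum_i\pi_i(F)\sum_s|f_i(s)|\mu(s)$. $\mathscr{F}_0=\mathscr{F}_{\mathrm{reg}}\cap\mathscr{F}_{\mathrm{ext}}\cap\mathscr{F}_{2\text{-}\mathrm{dec}}$; $\mathscr{F}_{\mathrm{opt}}$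 is the set of $F\in\mathscr{F}_0$ with $L(F)\le L(F')$ for all $F'\in\mathscr{F}_0$. $\mathscr{F}_1=\{F\in\mathscr{F}_{\mathrm{reg}}\cap\mathscr{F}_{2\text{-}\mathrm{dec}}:\mathcal{P}^1_{F,i}=\{0,1\}\ \forall i\in[F]\}$. $\mathcal{R}_F=\{i\in[F]:\text{for every }j\in[F]\text{ there is }\pmb{x}\in\mathcal{S}^{\ast}\text{ with }\tau^{\ast}_j(\pmb{x})=i\}$. *)

theory Defs
  imports Complex_Main "HOL-Library.Sublist"
begin

text \<open>A code-tuple over the source alphabet 's (a finite type) with binary code alphabet
  (bool, False = 0, True = 1). Tables are indexed by 0..<ntab F.\<close>

record 's code_tuple =
  ntab :: nat
  enc :: "nat \<Rightarrow> 's \<Rightarrow> bool list"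
  trans :: "nat \<Rightarrow> 's \<Rightarrow> nat"

definition is_code_tuple :: "'s code_tuple \<Rightarrow> bool" where
  "is_code_tuple F \<longleftrightarrow> ntab F \<ge> 1 \<and> (\<forall>i<ntab F. \<forall>s. trans F i s < ntab F)"

fun fstar :: "'s code_tuple \<Rightarrow> nat \<Rightarrow> 's list \<Rightarrow> bool list" where
  "fstar F i [] = []"
| "fstar F i (x # xs) = enc F i x @ fstar F (trans F i x) xs"

fun taustar :: "'s code_tuple \<Rightarrow> nat \<Rightarrow> 's list \<Rightarrow> nat" where
  "taustar F i [] = i"
| "taustar F i (x # xs) = taustar F (trans F i x) xs"

definition Pset :: "nat \<Rightarrow> 's code_tuple \<Rightarrow> nat \<Rightarrow> bool list \<Rightarrow> bool list set" where
  "Pset k F i b = {c. length c = k \<and> (\<exists>x. x \<noteq> [] \<and> prefix (b @ c) (fstar F i x)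
                                           \<and> prefix b (enc F i (hd x)))}"

definition Pbar :: "nat \<Rightarrow> 's code_tuple \<Rightarrow> nat \<Rightarrow> bool list \<Rightarrow> bool list set" where
  "Pbar k F i b = {c. length c = k \<and> (\<exists>x. x \<noteq> [] \<and> prefix (b @ c) (fstar F i x)
                                           \<and> strict_prefix b (enc F i (hd x)))}"

definition Sset :: "'s code_tuple \<Rightarrow> nat \<Rightarrow> bool list \<Rightarrow> 's set" where
  "Sset F i b = {s. enc F i s = b}"

definition two_dec :: "'s code_tuple \<Rightarrow> bool" where
  "two_dec F \<longleftrightarrow> (\<forall>i<ntab F. \<forall>s.
      Pset 2 F (trans F i s) [] \<inter> Pbar 2 F i (enc F i s) = {}) \<and>
    (\<forall>i<ntab F. \<forall>s s'. s \<noteq> s' \<and> enc F i s = enc F i s' \<longrightarrow>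
      Pset 2 F (trans F i s) [] \<inter> Pset 2 F (trans F i s') [] = {})"

definition ext :: "'s code_tuple \<Rightarrow> bool" where
  "ext F \<longleftrightarrow> (\<forall>i<ntab F. Pset 1 F i [] \<noteq> {})"

definition Qmat :: "('s::finite \<Rightarrow> real) \<Rightarrow> 's code_tuple \<Rightarrow> nat \<Rightarrow> nat \<Rightarrow> real" where
  "Qmat mu F i j = (\<Sum>s\<in>{s. trans F i s = j}. mu s)"

definition stationary :: "('s::finite \<Rightarrow> real) \<Rightarrow> 's code_tuple \<Rightarrow> (nat \<Rightarrow> real) \<Rightarrow> bool" where
  "stationary mu F p \<longleftrightarrow> (\<forall>j. j \<ge> ntab F \<longrightarrow> p j = 0) \<and>
     (\<forall>j<ntab F. (\<Sum>i<ntab F. p i * Qmat mu F i j) = p j) \<and> (\<Sum>i<ntab F. p i) = 1"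

definition reg :: "('s::finite \<Rightarrow> real) \<Rightarrow> 's code_tuple \<Rightarrow> bool" where
  "reg mu F \<longleftrightarrow> (\<exists>!p. stationary mu F p)"

definition stat_dist :: "('s::finite \<Rightarrow> real) \<Rightarrow> 's code_tuple \<Rightarrow> nat \<Rightarrow> real" where
  "stat_dist mu F = (THE p. stationary mu F p)"

definition avg_len :: "('s::finite \<Rightarrow> real) \<Rightarrow> 's code_tuple \<Rightarrow> real" where
  "avg_len mu F = (\<Sum>i<ntab F. stat_dist mu F i * (\<Sum>s\<in>UNIV. real (length (enc F i s)) * mu s))"

definition F0 :: "('s::finite \<Rightarrow> real) \<Rightarrow> 's code_tuple \<Rightarrow> bool" where
  "F0 mu F \<longleftrightarrow> is_code_tuple F \<and> reg mu F \<and> ext F \<and> two_dec F"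

definition Fopt :: "('s::finite \<Rightarrow> real) \<Rightarrow> 's code_tuple \<Rightarrow> bool" where
  "Fopt mu F \<longleftrightarrow> F0 mu F \<and> (\<forall>F'. F0 mu F' \<longrightarrow> avg_len mu F \<le> avg_len mu F')"

definition F1 :: "('s::finite \<Rightarrow> real) \<Rightarrow> 's code_tuple \<Rightarrow> bool" where
  "F1 mu F \<longleftrightarrow> is_code_tuple F \<and> reg mu F \<and> two_dec F \<and>
     (\<forall>i<ntab F. Pset 1 F i [] = {[False], [True]})"

definition Rset :: "'s code_tuple \<Rightarrow> nat set" where
  "Rset F = {i. i < ntab F \<and> (\<forall>j<ntab F. \<exists>x. taustar F j x = i)}"

end

theory Submission
  imports Defs
begin

text \<open>Suppose the pair [c1, c2] is missing from the two-bit prefixes of table j = tau_i(s). Following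
  the empty codewords from j gives a chain of tables j = k_0, ..., k_r all lacking [c1, c2]; in each
  of them a codeword starting with c1 is forced to continue with the bit not c2, and the last one
  has no empty codeword but a codeword c1 # g with g nonempty. Adding copies of k_0, ..., k_r in
  which this forced bit is deleted, linking the copies along the empty codewords and sending s in
  table i to the first copy, keeps the code tuple in F_0: the deleted bit carried no information,
  and since f_i(s) is a unique codeword that is no proper prefix of another one, the decoder knows
  when it enters the copies. The stationary distribution of the new tuple lumps onto that of F and
  gives positive mass to the last copy, so the average length strictly drops, contradicting
  optimality.\<close>

lemma fstar_append: "fstar F a (x @ y) = fstar F a x @ fstar F (taustar F a x) y"
  by (induction x arbitrary: a) auto

lemma trans_less_ntab: "is_code_tuple F \<Longrightarrow> a < ntab F \<Longrightarrow> trans F a t < ntab F"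
  by (simp add: is_code_tuple_def)

lemma taustar_less_ntab: "is_code_tuple F \<Longrightarrow> a < ntab F \<Longrightarrow> taustar F a x < ntab F"
  by (induction x arbitrary: a) (auto simp: is_code_tuple_def)

lemma prefix_iff_take: "prefix c w \<longleftrightarrow> take (length c) w = c"
  unfolding prefix_def by (metis append_eq_conv_conj append_take_drop_id)

lemma take_2_append_nonempty: "f \<noteq> [] \<Longrightarrow> take 1 u = take 1 w \<Longrightarrow> take 2 (f @ u) = take 2 (f @ w)"
  by (cases f; cases "tl f") (auto simp: take_Cons')

lemma take_2_append: "take 2 u = take 2 w \<Longrightarrow> take 2 (f @ u) = take 2 (f @ w)"
  by (metis take_append take_take diff_le_self min_absorb1)

lemma Pset_Nil: "0 < k \<Longrightarrow> Pset k F a [] = {c. length c = k \<and> (\<exists>x. prefix c (fstar F a x))}"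
proof (intro set_eqI iffI)
  fix c assume "0 < k" and "c \<in> {c. length c = k \<and> (\<exists>x. prefix c (fstar F a x))}"
  then obtain x where "length c = k" "prefix c (fstar F a x)" by blast
  with \<open>0 < k\<close> show "c \<in> Pset k F a []"
    unfolding Pset_def by (cases x) auto
qed (auto simp: Pset_def)

lemma pair_mem_Pset_2: "prefix [b, e] (fstar F a x) \<Longrightarrow> [b, e] \<in> Pset 2 F a []"
  by (auto simp: Pset_Nil)

lemma Pbar_eq: "Pbar k F a b = {c. length c = k \<and> (\<exists>t y. strict_prefix b (enc F a t) \<and>
    prefix (b @ c) (enc F a t @ fstar F (trans F a t) y))}"
proof (intro set_eqI iffI)
  fix c assume "c \<in> Pbar k F a b"
  then obtain x where x: "length c = k" "x \<noteq> []" "prefix (b @ c) (fstar F a x)"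
    "strict_prefix b (enc F a (hd x))" unfolding Pbar_def by blast
  then obtain t y where "x = t # y" by (cases x) auto
  with x have "strict_prefix b (enc F a t)" "prefix (b @ c) (enc F a t @ fstar F (trans F a t) y)"
    by simp_all
  with x(1) show "c \<in> {c. length c = k \<and> (\<exists>t y. strict_prefix b (enc F a t) \<and>
      prefix (b @ c) (enc F a t @ fstar F (trans F a t) y))}" by blast
next
  fix c assume "c \<in> {c. length c = k \<and> (\<exists>t y. strict_prefix b (enc F a t) \<and>
      prefix (b @ c) (enc F a t @ fstar F (trans F a t) y))}"
  then obtain t y where "length c = k" "strict_prefix b (enc F a t)"
    "prefix (b @ c) (enc F a t @ fstar F (trans F a t) y)" by blast
  then show "c \<in> Pbar k F a b"
    unfolding Pbar_def by (intro CollectI conjI exI[of _ "t # y"]) simp_all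
qed

lemma prefix_append_take_1:
  "length p \<le> length f + 1 \<Longrightarrow> prefix p (f @ w) \<longleftrightarrow> prefix p (f @ take 1 w)"
  unfolding prefix_iff_take
  by (cases "length p \<le> length f") (auto simp: take_append min_def take_take)

lemma Pbar_2_eq: "Pbar 2 F a b = {c. length c = 2 \<and> (\<exists>t y. strict_prefix b (enc F a t) \<and>
    prefix (b @ c) (enc F a t @ take 1 (fstar F (trans F a t) y)))}"
proof -
  have "prefix (b @ c) (f @ w) \<longleftrightarrow> prefix (b @ c) (f @ take 1 w)"
    if "strict_prefix b f" "length c = 2" for f w c
    using that by (intro prefix_append_take_1) (simp add: prefix_length_less Suc_leI)
  then show ?thesis unfolding Pbar_eq by blast
qed

lemma Qmat_eq_sum_if: "Qmat mu G a b = (\<Sum>t\<in>UNIV. if trans G a t = b then mu t else 0)"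
  unfolding Qmat_def by (simp add: sum.If_cases Collect_conj_eq[symmetric])

lemma sum_Qmat:
  fixes mu :: "'s::finite \<Rightarrow> real"
  assumes "finite B"
  shows "(\<Sum>b\<in>B. Qmat mu G a b) = (\<Sum>t\<in>UNIV. if trans G a t \<in> B then mu t else 0)"
proof -
  have "(\<Sum>b\<in>B. Qmat mu G a b) = (\<Sum>t\<in>UNIV. \<Sum>b\<in>B. if trans G a t = b then mu t else 0)"
    unfolding Qmat_eq_sum_if by (rule sum.swap)
  also have "\<dots> = (\<Sum>t\<in>UNIV. if trans G a t \<in> B then mu t else 0)"
    using assms by (simp add: sum.delta)
  finally show ?thesis .
qed

lemma Qmat_nonneg: "(\<And>x. 0 \<le> mu x) \<Longrightarrow> 0 \<le> Qmat mu G a b"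
  unfolding Qmat_def by (simp add: sum_nonneg)

lemma mu_le_Qmat: "(\<And>x. 0 \<le> (mu::'s::finite \<Rightarrow> real) x) \<Longrightarrow> mu t \<le> Qmat mu G a (trans G a t)"
  unfolding Qmat_def by (rule member_le_sum) auto

lemma Qmat_row_sum:
  fixes mu :: "'s::finite \<Rightarrow> real"
  assumes "is_code_tuple G" "a < ntab G" "(\<Sum>x\<in>UNIV. mu x) = 1"
  shows "(\<Sum>b<ntab G. Qmat mu G a b) = 1"
  using assms by (simp add: sum_Qmat is_code_tuple_def)

lemma stationary_stat_dist: "reg mu G \<Longrightarrow> stationary mu G (stat_dist mu G)"
  using theI'[of "stationary mu G"] unfolding reg_def stat_dist_def by blast

lemma stat_dist_unique: "reg mu G \<Longrightarrow> stationary mu G q \<Longrightarrow> stat_dist mu G = q"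
  unfolding reg_def stat_dist_def by (rule the1_equality)

text \<open>The vector of absolute values is sub-invariant, and its total inflow equals its total mass
  because the rows of Qmat sum to 1; hence it is invariant.\<close>

lemma stationary_abs_normalized:
  fixes mu :: "'s::finite \<Rightarrow> real"
  assumes G: "is_code_tuple G" and mu: "\<And>x. 0 \<le> mu x" "(\<Sum>x\<in>UNIV. mu x) = 1"
    and p: "stationary mu G p"
  shows "stationary mu G (\<lambda>a. \<bar>p a\<bar> / (\<Sum>b<ntab G. \<bar>p b\<bar>))"
proof -
  let ?n = "ntab G"
  define S where "S = (\<Sum>b<?n. \<bar>p b\<bar>)"
  let ?inflow = "\<lambda>b. \<Sum>a<?n. \<bar>p a\<bar> * Qmat mu G a b"
  have p0: "\<And>j. ?n \<le> j \<Longrightarrow> p j = 0" and p_bal: "\<And>j. j < ?n \<Longrightarrow> (\<Sum>a<?n. p a * Qmat mu G a j) = p j"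
    and p1: "(\<Sum>a<?n. p a) = 1" using p unfolding stationary_def by auto
  have "1 \<le> S" unfolding S_def using p1 by (metis sum_abs abs_one)
  have sub: "\<bar>p b\<bar> \<le> ?inflow b" if "b < ?n" for b
  proof -
    have "\<bar>p b\<bar> = \<bar>\<Sum>a<?n. p a * Qmat mu G a b\<bar>" using p_bal that by simp
    also have "\<dots> \<le> (\<Sum>a<?n. \<bar>p a * Qmat mu G a b\<bar>)" by (rule sum_abs)
    also have "\<dots> = ?inflow b" using Qmat_nonneg[of mu, OF mu(1)] by (simp add: abs_mult)
    finally show ?thesis .
  qed
  have "(\<Sum>b<?n. ?inflow b) = (\<Sum>a<?n. \<bar>p a\<bar> * (\<Sum>b<?n. Qmat mu G a b))"
    by (subst sum.swap) (simp add: sum_distrib_left)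
  also have "\<dots> = S" unfolding S_def using Qmat_row_sum[OF G _ mu(2)] by simp
  finally have "(\<Sum>b<?n. ?inflow b - \<bar>p b\<bar>) = 0"
    by (simp add: sum_subtractf S_def)
  then have bal: "?inflow b = \<bar>p b\<bar>" if "b < ?n" for b
    using sum_nonneg_eq_0_iff[of "{..<?n}" "\<lambda>b. ?inflow b - \<bar>p b\<bar>"] sub that by simp
  show ?thesis unfolding stationary_def S_def[symmetric]
  proof (intro conjI allI impI)
    show "(\<Sum>a<?n. \<bar>p a\<bar> / S * Qmat mu G a j) = \<bar>p j\<bar> / S" if "j < ?n" for j
      using bal[OF that] by (simp add: sum_divide_distrib[symmetric])
    show "(\<Sum>a<?n. \<bar>p a\<bar> / S) = 1"
      using \<open>1 \<le> S\<close> by (simp add: sum_divide_distrib[symmetric] S_def)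
  qed (use p0 in simp)
qed

lemma stat_dist_nonneg:
  fixes mu :: "'s::finite \<Rightarrow> real"
  assumes "is_code_tuple G" "\<And>x. 0 \<le> mu x" "(\<Sum>x\<in>UNIV. mu x) = 1" "reg mu G"
  shows "0 \<le> stat_dist mu G a"
proof -
  have "stat_dist mu G = (\<lambda>a. \<bar>stat_dist mu G a\<bar> / (\<Sum>b<ntab G. \<bar>stat_dist mu G b\<bar>))"
    using assms by (intro stat_dist_unique stationary_abs_normalized stationary_stat_dist)
  then have "stat_dist mu G a = \<bar>stat_dist mu G a\<bar> / (\<Sum>b<ntab G. \<bar>stat_dist mu G b\<bar>)"
    by metis
  also have "\<dots> \<ge> 0" by (simp add: sum_nonneg)
  finally show ?thesis .
qed

lemma stationary_mult_mu_le:
  fixes mu :: "'s::finite \<Rightarrow> real"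
  assumes G: "is_code_tuple G" and mu: "\<And>x. 0 \<le> mu x"
    and p: "stationary mu G p" "\<And>a. 0 \<le> p a" and a: "a < ntab G"
  shows "p a * mu t \<le> p (trans G a t)"
proof -
  let ?b = "trans G a t"
  have "p a * mu t \<le> p a * Qmat mu G a ?b"
    using mu_le_Qmat[of mu, OF mu] p(2) by (simp add: mult_left_mono)
  also have "\<dots> \<le> (\<Sum>a'<ntab G. p a' * Qmat mu G a' ?b)"
    by (rule member_le_sum[where f="\<lambda>a'. p a' * Qmat mu G a' ?b"])
       (use a p(2) Qmat_nonneg[of mu, OF mu] in auto)
  also have "\<dots> = p ?b" using p(1) trans_less_ntab[OF G a] unfolding stationary_def by auto
  finally show ?thesis .
qed

lemma stationary_pos_taustar:
  fixes mu :: "'s::finite \<Rightarrow> real"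
  assumes G: "is_code_tuple G" and mu: "\<And>x. 0 < mu x"
    and p: "stationary mu G p" "\<And>a. 0 \<le> p a"
  shows "a < ntab G \<Longrightarrow> 0 < p a \<Longrightarrow> 0 < p (taustar G a x)"
proof (induction x arbitrary: a)
  case (Cons t x)
  have "0 < p a * mu t" using Cons.prems mu by simp
  also have "\<dots> \<le> p (trans G a t)"
    using stationary_mult_mu_le[OF G _ p Cons.prems(1)] mu by (simp add: less_imp_le)
  finally show ?case using Cons.IH trans_less_ntab[OF G Cons.prems(1)] by simp
qed simp

lemma stationary_pos_Rset:
  fixes mu :: "'s::finite \<Rightarrow> real"
  assumes "is_code_tuple G" "\<And>x. 0 < mu x" "stationary mu G p" "\<And>a. 0 \<le> p a"
    and "i \<in> Rset G"
  shows "0 < p i"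
proof -
  have "(\<Sum>a<ntab G. p a) = 1" using assms(3) unfolding stationary_def by auto
  then obtain a where a: "a < ntab G" "0 < p a"
    by (metis lessThan_iff not_less sum_nonpos zero_less_one)
  then obtain x where "taustar G a x = i" using assms(5) unfolding Rset_def by auto
  then show ?thesis using stationary_pos_taustar[OF assms(1-4) a] by metis
qed

definition table_len :: "('s::finite \<Rightarrow> real) \<Rightarrow> 's code_tuple \<Rightarrow> nat \<Rightarrow> real" where
  "table_len mu G a = (\<Sum>t\<in>UNIV. real (length (enc G a t)) * mu t)"

lemma avg_len_eq: "avg_len mu G = (\<Sum>a<ntab G. stat_dist mu G a * table_len mu G a)"
  unfolding avg_len_def table_len_def ..

section \<open>Lumping a code tuple onto another\<close>

locale lumping =
  fixes mu :: "'s::finite \<Rightarrow> real" and G F :: "'s code_tuple" and pr :: "nat \<Rightarrow> nat"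
  assumes G_code_tuple: "is_code_tuple G"
    and pr_less: "a < ntab G \<Longrightarrow> pr a < ntab F"
    and pr_trans: "a < ntab G \<Longrightarrow> pr (trans G a t) = trans F (pr a) t"
begin

definition fiber :: "nat \<Rightarrow> nat set" where
  "fiber k = {a \<in> {..<ntab G}. pr a = k}"

definition push :: "(nat \<Rightarrow> real) \<Rightarrow> nat \<Rightarrow> real" where
  "push q k = (if k < ntab F then \<Sum>a\<in>fiber k. q a else 0)"

lemma finite_fiber [simp]: "finite (fiber k)"
  by (simp add: fiber_def)

lemma sum_fibers: "(\<Sum>k<ntab F. \<Sum>a\<in>fiber k. h a) = (\<Sum>a<ntab G. h a)"
  unfolding fiber_def by (rule sum.group) (use pr_less in auto)

lemma sum_push: "(\<Sum>k<ntab F. push q k) = (\<Sum>a<ntab G. q a)"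
  using sum_fibers[of q] by (simp add: push_def)

lemma sum_Qmat_fiber:
  assumes "a < ntab G"
  shows "(\<Sum>b\<in>fiber k. Qmat mu G a b) = Qmat mu F (pr a) k"
proof -
  have "trans G a t \<in> fiber k \<longleftrightarrow> trans F (pr a) t = k" for t
    using assms trans_less_ntab[OF G_code_tuple] pr_trans by (simp add: fiber_def)
  then have "(\<Sum>b\<in>fiber k. Qmat mu G a b) = (\<Sum>t\<in>UNIV. if trans F (pr a) t = k then mu t else 0)"
    by (simp add: sum_Qmat[OF finite_fiber])
  then show ?thesis by (simp only: Qmat_eq_sum_if)
qed

lemma sum_inflow_fiber:
  "(\<Sum>b\<in>fiber k. \<Sum>a<ntab G. q a * Qmat mu G a b) = (\<Sum>l<ntab F. push q l * Qmat mu F l k)"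
proof -
  have "(\<Sum>b\<in>fiber k. \<Sum>a<ntab G. q a * Qmat mu G a b) = (\<Sum>a<ntab G. q a * Qmat mu F (pr a) k)"
    by (subst sum.swap) (simp add: sum_distrib_left[symmetric] sum_Qmat_fiber)
  also have "\<dots> = (\<Sum>l<ntab F. \<Sum>a\<in>fiber l. q a * Qmat mu F (pr a) k)"
    by (rule sum_fibers[symmetric])
  also have "\<dots> = (\<Sum>l<ntab F. push q l * Qmat mu F l k)"
    by (rule sum.cong) (auto simp: push_def sum_distrib_right fiber_def)
  finally show ?thesis .
qed

lemma stationary_push:
  assumes q: "stationary mu G q"
  shows "stationary mu F (push q)"
  unfolding stationary_def
proof (intro conjI allI impI)
  show "(\<Sum>l<ntab F. push q l * Qmat mu F l k) = push q k" if "k < ntab F" for k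
  proof -
    have "(\<Sum>l<ntab F. push q l * Qmat mu F l k) = (\<Sum>b\<in>fiber k. \<Sum>a<ntab G. q a * Qmat mu G a b)"
      by (rule sum_inflow_fiber[symmetric])
    also have "\<dots> = (\<Sum>b\<in>fiber k. q b)"
      using q by (intro sum.cong) (auto simp: stationary_def fiber_def)
    finally show ?thesis using that by (simp add: push_def)
  qed
  show "(\<Sum>k<ntab F. push q k) = 1"
    using q by (simp add: stationary_def sum_push)
qed (simp add: push_def)

text \<open>Balance of the lumped vector yields balance at one chosen state of every fiber for free.\<close>

lemma stationary_lift:
  assumes q0: "\<And>a. ntab G \<le> a \<Longrightarrow> q a = 0" and p: "stationary mu F (push q)"
    and rep: "\<And>k. k < ntab F \<Longrightarrow> rep k \<in> fiber k"
    and bal: "\<And>b. b < ntab G \<Longrightarrow> b \<noteq> rep (pr b) \<Longrightarrow> (\<Sum>a<ntab G. q a * Qmat mu G a b) = q b"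
  shows "stationary mu G q"
  unfolding stationary_def
proof (intro conjI allI impI)
  show "(\<Sum>a<ntab G. q a) = 1"
    using p by (simp add: stationary_def sum_push)
  let ?inflow = "\<lambda>b. \<Sum>a<ntab G. q a * Qmat mu G a b"
  fix b assume b: "b < ntab G"
  show "?inflow b = q b"
  proof (cases "b = rep (pr b)")
    case True
    define k where "k = pr b"
    have k: "k < ntab F" and b_fiber: "b \<in> fiber k"
      using b pr_less by (auto simp: k_def fiber_def)
    have others: "?inflow c = q c" if "c \<in> fiber k - {b}" for c
    proof -
      have "c \<noteq> rep (pr c)" using that True[symmetric] by (simp add: fiber_def k_def)
      with that show ?thesis by (intro bal) (simp add: fiber_def)
    qed
    have "?inflow b + (\<Sum>c\<in>fiber k - {b}. ?inflow c) = (\<Sum>c\<in>fiber k. ?inflow c)"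
      by (simp add: sum.remove[OF finite_fiber b_fiber])
    also have "\<dots> = push q k"
      using p k by (simp add: sum_inflow_fiber stationary_def)
    also have "\<dots> = q b + (\<Sum>c\<in>fiber k - {b}. q c)"
      using k by (simp add: push_def sum.remove[OF finite_fiber b_fiber])
    finally show ?thesis using others by simp
  qed (use bal b in simp)
qed (use q0 in simp)

lemma avg_len_less:
  assumes "reg mu F" "reg mu G" "\<And>a. 0 \<le> stat_dist mu G a"
    and le: "\<And>a. a < ntab G \<Longrightarrow> table_len mu G a \<le> table_len mu F (pr a)"
    and less: "a < ntab G" "0 < stat_dist mu G a" "table_len mu G a < table_len mu F (pr a)"
  shows "avg_len mu G < avg_len mu F"
proof -
  let ?q = "stat_dist mu G"
  have "avg_len mu G < (\<Sum>a<ntab G. ?q a * table_len mu F (pr a))"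
    unfolding avg_len_eq
  proof (rule sum_strict_mono_ex1)
    show "\<forall>a\<in>{..<ntab G}. ?q a * table_len mu G a \<le> ?q a * table_len mu F (pr a)"
      using assms(3) le by (simp add: mult_left_mono)
    show "\<exists>a\<in>{..<ntab G}. ?q a * table_len mu G a < ?q a * table_len mu F (pr a)"
      using less by (auto intro!: bexI[of _ a] mult_strict_left_mono)
  qed simp
  also have "\<dots> = (\<Sum>k<ntab F. \<Sum>a\<in>fiber k. ?q a * table_len mu F (pr a))"
    by (rule sum_fibers[symmetric])
  also have "\<dots> = (\<Sum>k<ntab F. push ?q k * table_len mu F k)"
    by (rule sum.cong) (auto simp: push_def sum_distrib_right fiber_def)
  also have "push ?q = stat_dist mu F"
    by (rule stat_dist_unique[OF assms(1) stationary_push[OF stationary_stat_dist[OF assms(2)]],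
          symmetric])
  finally show ?thesis by (simp only: avg_len_eq)
qed

end


section \<open>Deleting a forced second letter\<close>

definition del_second :: "'a \<Rightarrow> 'a list \<Rightarrow> 'a list" where
  "del_second c w = (case w of [] \<Rightarrow> [] | a # w' \<Rightarrow> if a = c then a # tl w' else w)"

definition second_forced :: "'a \<Rightarrow> 'a \<Rightarrow> 'a list \<Rightarrow> bool" where
  "second_forced c e w \<longleftrightarrow> (w \<noteq> [] \<longrightarrow> hd w = c \<longrightarrow> tl w \<noteq> [] \<and> hd (tl w) = e)"

lemma del_second_Nil [simp]: "del_second c [] = []"
  by (simp add: del_second_def)

lemma del_second_eq_Nil_iff [simp]: "del_second c w = [] \<longleftrightarrow> w = []"
  by (cases w) (auto simp: del_second_def)

lemma take_del_second [simp]: "n \<le> 1 \<Longrightarrow> take n (del_second c w) = take n w"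
  by (cases w; cases n) (auto simp: del_second_def)

lemma length_del_second_le: "length (del_second c w) \<le> length w"
  by (cases w) (auto simp: del_second_def)

lemma length_del_second_less: "g \<noteq> [] \<Longrightarrow> length (del_second c (c # g)) < length (c # g)"
  by (cases g) (auto simp: del_second_def)

lemma del_second_id: "w = [] \<or> hd w \<noteq> c \<Longrightarrow> del_second c w = w"
  by (cases w) (auto simp: del_second_def)

lemma hd_del_second: "w \<noteq> [] \<Longrightarrow> hd (del_second c w) = hd w"
  by (cases w) (auto simp: del_second_def)

lemma del_second_append:
  "w \<noteq> [] \<Longrightarrow> second_forced c e w \<Longrightarrow> del_second c (w @ u) = del_second c w @ u"
  by (cases w; cases "tl w") (auto simp: del_second_def second_forced_def)

lemma del_second_inj:
  "second_forced c e f \<Longrightarrow> second_forced c e g \<Longrightarrow> del_second c f = del_second c g \<Longrightarrow> f = g"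
  by (cases f; cases g; cases "tl f"; cases "tl g")
     (auto simp: del_second_def second_forced_def split: if_splits)

lemma strict_prefix_del_second:
  assumes f: "second_forced c e f" and g: "second_forced c e g" "g \<noteq> []"
    and f_Nil: "f = [] \<Longrightarrow> hd g \<noteq> c"
    and sp: "strict_prefix (del_second c f) (del_second c g)"
    and p: "prefix (del_second c f @ u) (del_second c g @ v)"
  shows "strict_prefix f g \<and> prefix (f @ u) (g @ v)"
proof (cases "f \<noteq> [] \<and> hd f = c")
  case True
  then obtain f' where f': "f = c # e # f'"
    using f unfolding second_forced_def by (cases f; cases "tl f") auto
  then have "del_second c f = c # f'" by (simp add: del_second_def)
  with sp have "hd (del_second c g) = c"
    by (cases "del_second c g") (auto simp: strict_prefix_def)
  then have "hd g = c" using hd_del_second[OF g(2)] by simp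
  then obtain g' where "g = c # e # g'"
    using g unfolding second_forced_def by (cases g; cases "tl g") auto
  with f' sp p show ?thesis by (auto simp: del_second_def)
next
  case False
  then have f_id: "del_second c f = f" by (intro del_second_id) auto
  have "hd g \<noteq> c"
  proof (cases "f = []")
    case False
    then have "hd (del_second c g) = hd f"
      using sp f_id by (metis prefix_order.less_imp_le Nil_prefix prefix_def hd_append2)
    then show ?thesis using False \<open>\<not> (f \<noteq> [] \<and> hd f = c)\<close> hd_del_second[OF g(2)] by simp
  qed (use f_Nil in simp)
  then have "del_second c g = g" by (intro del_second_id) simp
  with f_id sp p show ?thesis by simp
qed


locale missing_pair =
  fixes mu :: "'s::finite \<Rightarrow> real" and F :: "'s code_tuple" and i :: nat and s :: 's
    and c1 c2 :: bool
  assumes card_UNIV: "2 \<le> card (UNIV :: 's set)"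
    and mu_pos: "\<And>x. 0 < mu x" and mu_sum: "(\<Sum>x\<in>UNIV. mu x) = 1"
    and code_tuple: "is_code_tuple F" and reg: "reg mu F" and two_dec: "two_dec F"
    and Pset_1: "\<And>a. a < ntab F \<Longrightarrow> Pset 1 F a [] = {[False], [True]}"
    and i_Rset: "i \<in> Rset F"
    and Pbar_0: "Pbar 0 F i (enc F i s) = {}"
    and Sset_single: "card (Sset F i (enc F i s)) = 1"
    and pair_missing: "[c1, c2] \<notin> Pset 2 F (trans F i s) []"
begin

abbreviation "m \<equiv> ntab F"
abbreviation "j \<equiv> trans F i s"

lemma mu_nonneg: "0 \<le> mu x"
  using mu_pos[of x] by simp

lemma i_less: "i < m"
  using i_Rset unfolding Rset_def by auto

lemma trans_less: "a < m \<Longrightarrow> trans F a t < m"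
  using code_tuple by (rule trans_less_ntab)

lemma j_less: "j < m"
  using trans_less i_less by simp

lemma ex_other_symbol: "\<exists>t'. t' \<noteq> (t :: 's)"
  using card_UNIV by (metis card_le_Suc0_iff_eq finite_UNIV not_less_eq_eq numeral_2_eq_2)

lemma enc_i_s_unique:
  assumes "enc F i t = enc F i s"
  shows "t = s"
proof -
  obtain x where "Sset F i (enc F i s) = {x}"
    using Sset_single card_1_singletonE by blast
  then have "s = x" "t = x" using assms by (auto simp: Sset_def)
  then show ?thesis by simp
qed

lemma enc_i_s_nonempty: "enc F i s \<noteq> []"
proof
  assume empty: "enc F i s = []"
  obtain t where "t \<noteq> s" using ex_other_symbol by blast
  then have "strict_prefix (enc F i s) (enc F i t)"
    using enc_i_s_unique empty by (metis Nil_prefix prefix_order.dual_order.not_eq_order_implies_strict)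
  then have "[] \<in> Pbar 0 F i (enc F i s)" unfolding Pbar_eq by auto
  with Pbar_0 show False by simp
qed

lemma ex_fstar_first_bit: "a < m \<Longrightarrow> \<exists>x. take 1 (fstar F a x) = [b]"
proof -
  assume "a < m"
  then have "[b] \<in> Pset 1 F a []" using Pset_1 by (cases b) auto
  then show ?thesis by (auto simp: Pset_Nil prefix_iff_take)
qed

lemma ex_fstar_nonempty: "a < m \<Longrightarrow> \<exists>x. fstar F a x \<noteq> []"
  using ex_fstar_first_bit[of a False] by (metis list.distinct(1) take_Nil)

lemma ex_second_bit: "a < m \<Longrightarrow> \<exists>e. [b, e] \<in> Pset 2 F a []"
proof -
  assume a: "a < m"
  obtain x u where x: "fstar F a x = b # u"
    using ex_fstar_first_bit[OF a, of b] by (metis append_take_drop_id append_Cons append_Nil)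
  obtain y where y: "fstar F (taustar F a x) y \<noteq> []"
    using ex_fstar_nonempty taustar_less_ntab[OF code_tuple a] by blast
  have "prefix [b, hd (u @ fstar F (taustar F a x) y)] (fstar F a (x @ y))"
    using x y by (cases "u @ fstar F (taustar F a x) y") (auto simp: fstar_append)
  then show ?thesis by (blast intro: pair_mem_Pset_2)
qed

lemma Pset_2_trans_disjoint_Pbar:
  "a < m \<Longrightarrow> Pset 2 F (trans F a t) [] \<inter> Pbar 2 F a (enc F a t) = {}"
  using two_dec unfolding two_dec_def by blast

lemma Pset_2_trans_disjoint:
  "a < m \<Longrightarrow> t \<noteq> t' \<Longrightarrow> enc F a t = enc F a t' \<Longrightarrow>
    Pset 2 F (trans F a t) [] \<inter> Pset 2 F (trans F a t') [] = {}"
  using two_dec unfolding two_dec_def by blast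

lemma Pset_2_trans_empty_subset:
  "enc F a t = [] \<Longrightarrow> Pset 2 F (trans F a t) [] \<subseteq> Pset 2 F a []"
  by (auto simp: Pset_Nil intro: exI[of _ "t # x" for x])

definition lacks_pair :: "nat \<Rightarrow> bool" where
  "lacks_pair a \<longleftrightarrow> a < m \<and> [c1, c2] \<notin> Pset 2 F a []"

lemma lacks_pair_j: "lacks_pair j"
  using pair_missing j_less by (simp add: lacks_pair_def)

lemma lacks_pair_other:
  assumes "lacks_pair a"
  shows "[c1, \<not> c2] \<in> Pset 2 F a []"
proof -
  obtain e where e: "[c1, e] \<in> Pset 2 F a []"
    using assms ex_second_bit by (auto simp: lacks_pair_def)
  then have "e \<noteq> c2" using assms unfolding lacks_pair_def by blast
  then have "e = (\<not> c2)" by blast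
  with e show ?thesis by simp
qed

lemma lacks_pair_trans_empty: "lacks_pair a \<Longrightarrow> enc F a t = [] \<Longrightarrow> lacks_pair (trans F a t)"
  using Pset_2_trans_empty_subset trans_less unfolding lacks_pair_def by blast

lemma empty_codeword_unique:
  assumes a: "lacks_pair a" and "enc F a t = []" "enc F a t' = []"
  shows "t = t'"
proof (rule ccontr)
  assume "t \<noteq> t'"
  then have "Pset 2 F (trans F a t) [] \<inter> Pset 2 F (trans F a t') [] = {}"
    using Pset_2_trans_disjoint a assms(2,3) by (simp add: lacks_pair_def)
  moreover have "[c1, \<not> c2] \<in> Pset 2 F (trans F a t) []" "[c1, \<not> c2] \<in> Pset 2 F (trans F a t') []"
    using lacks_pair_other lacks_pair_trans_empty a assms(2,3) by blast+
  ultimately show False by blast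
qed

text \<open>Otherwise [c1, \<not> c2] would lie both in the two-bit prefixes of the successor of the
  empty codeword and in Pbar 2 F a [], which two_dec requires to be disjoint.\<close>

lemma empty_codeword_excludes_c1:
  assumes a: "lacks_pair a" and empty: "enc F a t = []" and "enc F a t' \<noteq> []"
  shows "hd (enc F a t') \<noteq> c1"
proof
  assume "hd (enc F a t') = c1"
  then obtain g where t': "enc F a t' = c1 # g"
    using \<open>enc F a t' \<noteq> []\<close> by (cases "enc F a t'") auto
  have "a < m" using a by (simp add: lacks_pair_def)
  obtain y where y: "fstar F (trans F a t') y \<noteq> []"
    using ex_fstar_nonempty trans_less \<open>a < m\<close> by blast
  define e where "e = hd (g @ fstar F (trans F a t') y)"
  have pre: "prefix [c1, e] (enc F a t' @ fstar F (trans F a t') y)"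
    unfolding t' e_def using y by (cases "g @ fstar F (trans F a t') y") auto
  then have "[c1, e] \<in> Pset 2 F a []"
    using pair_mem_Pset_2[of c1 e F a "t' # y"] by simp
  then have "e = (\<not> c2)" using a unfolding lacks_pair_def by (cases e; cases c2) auto
  moreover have "[c1, e] \<in> Pbar 2 F a []"
    unfolding Pbar_eq using pre t' by (auto intro!: exI[of _ t'] exI[of _ y])
  moreover have "[c1, \<not> c2] \<in> Pset 2 F (trans F a t) []"
    using lacks_pair_other lacks_pair_trans_empty a empty by blast
  ultimately show False using Pset_2_trans_disjoint_Pbar[OF \<open>a < m\<close>, of t] empty by auto
qed

lemma second_forced_enc: "lacks_pair a \<Longrightarrow> second_forced c1 (\<not> c2) (enc F a t)"
proof -
  assume a: "lacks_pair a"
  then have "a < m" by (simp add: lacks_pair_def)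
  have forced: "tl (enc F a t) \<noteq> [] \<and> hd (tl (enc F a t)) = (\<not> c2)" if "enc F a t = c1 # g" for g
  proof (cases g)
    case Nil
    obtain y where "take 1 (fstar F (trans F a t) y) = [c2]"
      using ex_fstar_first_bit trans_less \<open>a < m\<close> by blast
    then have "prefix [c1, c2] (fstar F a (t # y))"
      using that Nil by (simp add: prefix_iff_take)
    then have "[c1, c2] \<in> Pset 2 F a []" by (rule pair_mem_Pset_2)
    then show ?thesis using a by (simp add: lacks_pair_def)
  next
    case (Cons e g')
    then have "[c1, e] \<in> Pset 2 F a []"
      using that pair_mem_Pset_2[of c1 e F a "[t]"] by simp
    then have "e \<noteq> c2" using a unfolding lacks_pair_def by blast
    then show ?thesis using that Cons by simp
  qed
  show ?thesis unfolding second_forced_def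
  proof (intro impI)
    assume "enc F a t \<noteq> []" "hd (enc F a t) = c1"
    then have "enc F a t = c1 # tl (enc F a t)" by (cases "enc F a t") auto
    then show "tl (enc F a t) \<noteq> [] \<and> hd (tl (enc F a t)) = (\<not> c2)" by (rule forced)
  qed
qed

definition has_empty :: "nat \<Rightarrow> bool" where
  "has_empty a \<longleftrightarrow> (\<exists>t. enc F a t = [])"

definition eps_succ :: "nat \<Rightarrow> nat" where
  "eps_succ a = trans F a (SOME t. enc F a t = [])"

lemma eps_succ_eq: "lacks_pair a \<Longrightarrow> enc F a t = [] \<Longrightarrow> eps_succ a = trans F a t"
  unfolding eps_succ_def by (metis (mono_tags, lifting) someI_ex empty_codeword_unique)

text \<open>A word whose code starts with c1 cannot use the empty codewords forever: at a state with an
  empty codeword no other codeword starts with c1.\<close>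

lemma c1_word_leaves_chain:
  "lacks_pair a \<Longrightarrow> take 1 (fstar F a x) = [c1] \<Longrightarrow> \<exists>n. \<not> has_empty ((eps_succ ^^ n) a)"
proof (induction x arbitrary: a)
  case (Cons t x)
  show ?case
  proof (cases "has_empty a")
    case True
    then obtain t0 where t0: "enc F a t0 = []" unfolding has_empty_def by blast
    have t: "enc F a t = []"
    proof (rule ccontr)
      assume "enc F a t \<noteq> []"
      moreover from this have "hd (enc F a t) = c1"
        using Cons.prems(2) by (cases "enc F a t") auto
      ultimately show False using empty_codeword_excludes_c1[OF Cons.prems(1) t0] by blast
    qed
    then obtain n where "\<not> has_empty ((eps_succ ^^ n) (trans F a t))"
      using Cons lacks_pair_trans_empty by fastforce
    then have "\<not> has_empty ((eps_succ ^^ Suc n) a)"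
      using eps_succ_eq[OF Cons.prems(1) t] by (simp add: funpow_Suc_right del: funpow.simps)
    then show ?thesis by blast
  qed (metis funpow_0)
qed simp

definition chain :: "nat \<Rightarrow> nat" where
  "chain n = (eps_succ ^^ n) j"

definition chain_len :: nat where
  "chain_len = (LEAST n. \<not> has_empty (chain n))"

lemma chain_0: "chain 0 = j"
  by (simp add: chain_def)

lemma chain_Suc: "chain (Suc n) = eps_succ (chain n)"
  by (simp add: chain_def)

lemma not_has_empty_chain_len: "\<not> has_empty (chain chain_len)"
proof -
  have "\<exists>n. \<not> has_empty (chain n)"
    using ex_fstar_first_bit[OF j_less, of c1] c1_word_leaves_chain[OF lacks_pair_j]
    unfolding chain_def by blast
  then show ?thesis unfolding chain_len_def by (rule LeastI_ex)
qed

lemma has_empty_chain: "n < chain_len \<Longrightarrow> has_empty (chain n)"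
  unfolding chain_len_def using not_less_Least by blast

lemma less_chain_len: "n \<le> chain_len \<Longrightarrow> enc F (chain n) t = [] \<Longrightarrow> n < chain_len"
  using not_has_empty_chain_len unfolding has_empty_def by (metis le_neq_implies_less)

lemma lacks_pair_chain: "n \<le> chain_len \<Longrightarrow> lacks_pair (chain n)"
proof (induction n)
  case (Suc n)
  then obtain t where "enc F (chain n) t = []"
    using has_empty_chain unfolding has_empty_def by (metis Suc_le_eq)
  with Suc show ?case
    using eps_succ_eq lacks_pair_trans_empty by (simp add: chain_Suc)
qed (simp add: chain_0 lacks_pair_j)

lemma chain_less: "n \<le> chain_len \<Longrightarrow> chain n < m"
  using lacks_pair_chain lacks_pair_def by blast

lemma trans_chain_empty: "n < chain_len \<Longrightarrow> enc F (chain n) t = [] \<Longrightarrow> trans F (chain n) t = chain (Suc n)"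
  using eps_succ_eq lacks_pair_chain by (simp add: chain_Suc)

lemma chain_excludes_c1:
  "n < chain_len \<Longrightarrow> enc F (chain n) t \<noteq> [] \<Longrightarrow> hd (enc F (chain n) t) \<noteq> c1"
  using has_empty_chain empty_codeword_excludes_c1 lacks_pair_chain unfolding has_empty_def
  by (meson less_imp_le)

lemma chain_len_shortenable: "\<exists>t g. enc F (chain chain_len) t = c1 # g \<and> g \<noteq> []"
proof -
  obtain x where x: "take 1 (fstar F (chain chain_len) x) = [c1]"
    using ex_fstar_first_bit chain_less by blast
  then obtain t y where "x = t # y" by (cases x) auto
  moreover have "enc F (chain chain_len) t \<noteq> []"
    using not_has_empty_chain_len unfolding has_empty_def by blast
  ultimately obtain g where g: "enc F (chain chain_len) t = c1 # g"
    using x by (cases "enc F (chain chain_len) t") auto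
  then have "g \<noteq> []"
    using second_forced_enc[OF lacks_pair_chain[of chain_len], of t] by (simp add: second_forced_def)
  with g show ?thesis by blast
qed

lemma lacks_pair_ex_nonempty: "lacks_pair a \<Longrightarrow> \<exists>t. enc F a t \<noteq> []"
proof -
  assume a: "lacks_pair a"
  obtain t t' :: 's where "t \<noteq> t'" using ex_other_symbol by blast
  then show ?thesis using empty_codeword_unique[OF a] by blast
qed


subsection \<open>The shortened code tuple\<close>

text \<open>Table m + n is a copy of table chain n in which the forced second bit \<not> c2 after a
  leading c1 is deleted; its empty codeword leads to the next copy, and symbol s in table i now
  leads to copy 0, a copy of j.\<close>

definition F_short :: "'s code_tuple" where
  "F_short = \<lparr>ntab = m + chain_len + 1,
     enc = (\<lambda>a t. if a < m then enc F a t else del_second c1 (enc F (chain (a - m)) t)),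
     trans = (\<lambda>a t. if a < m then (if a = i \<and> t = s then m else trans F a t)
               else if enc F (chain (a - m)) t = [] then Suc a else trans F (chain (a - m)) t)\<rparr>"

lemma ntab_F_short [simp]: "ntab F_short = m + chain_len + 1"
  by (simp add: F_short_def)

lemma enc_F_short_orig: "a < m \<Longrightarrow> enc F_short a t = enc F a t"
  by (simp add: F_short_def)

lemma enc_F_short_copy: "enc F_short (m + n) t = del_second c1 (enc F (chain n) t)"
  by (simp add: F_short_def)

lemma trans_F_short_orig: "a < m \<Longrightarrow> trans F_short a t = (if a = i \<and> t = s then m else trans F a t)"
  by (simp add: F_short_def)

lemma trans_F_short_copy:
  "trans F_short (m + n) t = (if enc F (chain n) t = [] then m + Suc n else trans F (chain n) t)"
  by (simp add: F_short_def)

lemma F_short_cases: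
  assumes "a < ntab F_short"
  obtains "a < m" | n where "a = m + n" "n \<le> chain_len"
proof (cases "a < m")
  case False
  with assms show ?thesis by (intro that(2)[of "a - m"]) auto
qed (rule that(1))

lemma code_tuple_F_short: "is_code_tuple F_short"
  unfolding is_code_tuple_def
proof (intro conjI allI impI)
  fix a t assume a: "a < ntab F_short"
  then show "trans F_short a t < ntab F_short"
  proof (cases rule: F_short_cases)
    case 1
    then show ?thesis using trans_less[OF 1, of t] by (simp add: trans_F_short_orig)
  next
    case (2 n)
    then show ?thesis using less_chain_len[of n t] trans_less[OF chain_less[of n], of t]
      by (auto simp: trans_F_short_copy)
  qed
qed simp

definition proj :: "nat \<Rightarrow> nat" where
  "proj a = (if a < m then a else chain (a - m))"

lemma proj_orig: "a < m \<Longrightarrow> proj a = a"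
  by (simp add: proj_def)

lemma proj_copy: "proj (m + n) = chain n"
  by (simp add: proj_def)

lemma proj_less: "a < ntab F_short \<Longrightarrow> proj a < m"
  by (erule F_short_cases) (auto simp: proj_orig proj_copy chain_less)

lemma proj_trans:
  assumes "a < ntab F_short"
  shows "proj (trans F_short a t) = trans F (proj a) t"
  using assms
proof (cases rule: F_short_cases)
  case 1
  then show ?thesis using trans_less[OF 1, of t]
    by (auto simp: trans_F_short_orig proj_orig proj_copy[of 0, simplified] chain_0)
next
  case (2 n)
  then show ?thesis using less_chain_len[of n t] trans_chain_empty[of n t] trans_less[OF chain_less[of n]]
    by (auto simp: trans_F_short_copy proj_def)
qed

lemma enc_F_short: "a < ntab F_short \<Longrightarrow>
    enc F_short a t = (if a < m then enc F (proj a) t else del_second c1 (enc F (proj a) t))"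
  by (erule F_short_cases) (auto simp: enc_F_short_orig enc_F_short_copy proj_orig proj_copy)

definition shorten_at :: "nat \<Rightarrow> bool list \<Rightarrow> bool list" where
  "shorten_at a w = (if a < m then w else del_second c1 w)"

lemma take_2_fstar_F_short_Cons_orig:
  assumes a: "a < m"
    and IH: "\<And>b. b < ntab F_short \<Longrightarrow> \<exists>x'. take 2 (fstar F_short b y) = take 2 (shorten_at b (fstar F (proj b) x'))"
  shows "\<exists>x'. take 2 (fstar F_short a (t # y)) = take 2 (shorten_at a (fstar F (proj a) x'))"
proof (cases "a = i \<and> t = s")
  case True
  obtain x' where "take 2 (fstar F_short m y) = take 2 (del_second c1 (fstar F j x'))"
    using IH[of m] by (auto simp: shorten_at_def proj_copy[of 0, simplified] chain_0)
  from arg_cong[OF this, of "take 1"] have first: "take 1 (fstar F_short m y) = take 1 (fstar F j x')"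
    by simp
  have "take 2 (fstar F_short a (t # y)) = take 2 (enc F i s @ fstar F_short m y)"
    using True a by (simp add: enc_F_short_orig trans_F_short_orig)
  also have "\<dots> = take 2 (enc F i s @ fstar F j x')"
    by (rule take_2_append_nonempty[OF enc_i_s_nonempty first])
  also have "\<dots> = take 2 (shorten_at a (fstar F (proj a) (s # x')))"
    using True a by (simp add: shorten_at_def proj_orig)
  finally show ?thesis by blast
next
  case False
  let ?b = "trans F a t"
  have "?b < m" by (rule trans_less[OF a])
  then obtain x' where x': "take 2 (fstar F_short ?b y) = take 2 (fstar F ?b x')"
    using IH[of ?b] by (auto simp: shorten_at_def proj_orig)
  have "take 2 (fstar F_short a (t # y)) = take 2 (enc F a t @ fstar F_short ?b y)"
    using False a by (auto simp: enc_F_short_orig trans_F_short_orig)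
  also have "\<dots> = take 2 (enc F a t @ fstar F ?b x')"
    by (rule take_2_append[OF x'])
  also have "\<dots> = take 2 (shorten_at a (fstar F (proj a) (t # x')))"
    using a by (simp add: shorten_at_def proj_orig)
  finally show ?thesis by blast
qed

lemma take_2_fstar_F_short_Cons_copy:
  assumes a: "a = m + n" and n: "n \<le> chain_len"
    and IH: "\<And>b. b < ntab F_short \<Longrightarrow> \<exists>x'. take 2 (fstar F_short b y) = take 2 (shorten_at b (fstar F (proj b) x'))"
  shows "\<exists>x'. take 2 (fstar F_short a (t # y)) = take 2 (shorten_at a (fstar F (proj a) x'))"
proof (cases "enc F (chain n) t = []")
  case True
  then have n_less: "n < chain_len" using n less_chain_len by blast
  have "m + Suc n < ntab F_short" using n_less by simp
  then obtain x' where x': "take 2 (fstar F_short (m + Suc n) y) = take 2 (del_second c1 (fstar F (chain (Suc n)) x'))"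
    using IH[of "m + Suc n"] by (auto simp: shorten_at_def proj_def)
  have "take 2 (fstar F_short a (t # y)) = take 2 (fstar F_short (m + Suc n) y)"
    using True a by (simp add: enc_F_short_copy trans_F_short_copy)
  also have "\<dots> = take 2 (del_second c1 (fstar F (chain (Suc n)) x'))"
    by (rule x')
  also have "\<dots> = take 2 (shorten_at a (fstar F (proj a) (t # x')))"
    using True a trans_chain_empty[OF n_less True] by (simp add: shorten_at_def proj_copy)
  finally show ?thesis by blast
next
  case False
  let ?b = "trans F (chain n) t"
  let ?w = "del_second c1 (enc F (chain n) t)"
  have "?b < m" using trans_less chain_less[OF n] by blast
  then obtain x' where x': "take 2 (fstar F_short ?b y) = take 2 (fstar F ?b x')"
    using IH[of ?b] by (auto simp: shorten_at_def proj_orig)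
  have "take 2 (fstar F_short a (t # y)) = take 2 (?w @ fstar F_short ?b y)"
    using False a by (simp add: enc_F_short_copy trans_F_short_copy)
  also have "\<dots> = take 2 (?w @ fstar F ?b x')"
    by (rule take_2_append[OF x'])
  also have "?w @ fstar F ?b x' = del_second c1 (enc F (chain n) t @ fstar F ?b x')"
    using del_second_append[OF False second_forced_enc[OF lacks_pair_chain[OF n]]] by simp
  also have "\<dots> = shorten_at a (fstar F (proj a) (t # x'))"
    using a by (simp add: shorten_at_def proj_copy)
  finally show ?thesis by blast
qed

lemma take_2_fstar_F_short:
  "a < ntab F_short \<Longrightarrow> \<exists>x'. take 2 (fstar F_short a x) = take 2 (shorten_at a (fstar F (proj a) x'))"
proof (induction x arbitrary: a)
  case Nil
  show ?case by (intro exI[of _ "[]"]) (simp add: shorten_at_def)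
next
  case (Cons t y)
  from Cons.prems show ?case
  proof (cases rule: F_short_cases)
    case 1
    then show ?thesis by (rule take_2_fstar_F_short_Cons_orig[OF _ Cons.IH])
  next
    case (2 n)
    then show ?thesis by (rule take_2_fstar_F_short_Cons_copy[OF _ _ Cons.IH])
  qed
qed

lemma take_1_fstar_F_short:
  assumes "a < ntab F_short"
  shows "\<exists>x'. take 1 (fstar F_short a x) = take 1 (fstar F (proj a) x')"
proof -
  obtain x' where "take 2 (fstar F_short a x) = take 2 (shorten_at a (fstar F (proj a) x'))"
    using take_2_fstar_F_short[OF assms] by blast
  from arg_cong[OF this, of "take 1"] show ?thesis by (auto simp: shorten_at_def)
qed

lemma Pset_2_F_short_orig: "a < m \<Longrightarrow> Pset 2 F_short a [] \<subseteq> Pset 2 F a []"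
proof
  fix c assume a: "a < m" and "c \<in> Pset 2 F_short a []"
  then obtain x where c: "length c = 2" "prefix c (fstar F_short a x)" by (auto simp: Pset_Nil)
  obtain x' where "take 2 (fstar F_short a x) = take 2 (fstar F a x')"
    using take_2_fstar_F_short[of a x] a by (auto simp: shorten_at_def proj_orig)
  then have "prefix c (fstar F a x')" using c prefix_iff_take by metis
  with c show "c \<in> Pset 2 F a []" by (auto simp: Pset_Nil)
qed

lemma Pset_2_F_short_copy:
  assumes n: "n \<le> chain_len" and c: "c \<in> Pset 2 F_short (m + n) []" and hd: "hd c \<noteq> c1"
  shows "c \<in> Pset 2 F (chain n) []"
proof -
  obtain x where c: "length c = 2" "prefix c (fstar F_short (m + n) x)" using c by (auto simp: Pset_Nil)
  obtain x' where x': "take 2 (fstar F_short (m + n) x) = take 2 (del_second c1 (fstar F (chain n) x'))"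
    using take_2_fstar_F_short[of "m + n" x] n by (auto simp: shorten_at_def proj_copy)
  let ?w = "fstar F (chain n) x'"
  have c_eq: "c = take 2 (del_second c1 ?w)" using c x' prefix_iff_take by metis
  then have "?w \<noteq> []" using c by auto
  then have "hd c = hd ?w" using c_eq by (simp add: hd_take hd_del_second)
  then have "del_second c1 ?w = ?w" using hd by (intro del_second_id) simp
  then have "prefix c ?w" using c_eq by (simp add: take_is_prefix)
  with c show ?thesis by (auto simp: Pset_Nil)
qed

lemma take_1_fstar_F_short_trans:
  assumes "a < ntab F_short"
  shows "\<exists>y'. take 1 (fstar F_short (trans F_short a t) y) = take 1 (fstar F (trans F (proj a) t) y')"
  using take_1_fstar_F_short[OF trans_less_ntab[OF code_tuple_F_short assms]] proj_trans[OF assms]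
  by simp

lemma Pbar_2_F_short_orig: "a < m \<Longrightarrow> Pbar 2 F_short a b \<subseteq> Pbar 2 F a b"
proof
  fix c assume a: "a < m" and "c \<in> Pbar 2 F_short a b"
  then obtain t y where c: "length c = 2" "strict_prefix b (enc F a t)"
    "prefix (b @ c) (enc F a t @ take 1 (fstar F_short (trans F_short a t) y))"
    unfolding Pbar_2_eq enc_F_short_orig[OF a] by blast
  obtain y' where "take 1 (fstar F_short (trans F_short a t) y) = take 1 (fstar F (trans F a t) y')"
    using take_1_fstar_F_short_trans[of a t y] a by (auto simp: proj_orig)
  with c(3) have "prefix (b @ c) (enc F a t @ take 1 (fstar F (trans F a t) y'))" by simp
  with c(1,2) show "c \<in> Pbar 2 F a b" unfolding Pbar_2_eq by blast
qed

lemma Pbar_2_F_short_copy: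
  assumes n: "n \<le> chain_len"
  shows "Pbar 2 F_short (m + n) (enc F_short (m + n) t0) \<subseteq> Pbar 2 F (chain n) (enc F (chain n) t0)"
proof
  let ?enc = "enc F (chain n)"
  fix c assume "c \<in> Pbar 2 F_short (m + n) (enc F_short (m + n) t0)"
  then obtain t y where c: "length c = 2" "strict_prefix (del_second c1 (?enc t0)) (del_second c1 (?enc t))"
    "prefix (del_second c1 (?enc t0) @ c) (del_second c1 (?enc t) @ take 1 (fstar F_short (trans F_short (m + n) t) y))"
    unfolding Pbar_2_eq enc_F_short_copy by blast
  have t: "?enc t \<noteq> []" using c(2) by auto
  obtain y' where y': "take 1 (fstar F_short (trans F_short (m + n) t) y) = take 1 (fstar F (trans F (chain n) t) y')"
    using take_1_fstar_F_short_trans[of "m + n" t y] n by (auto simp: proj_copy)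
  have no_c1: "hd (?enc t) \<noteq> c1" if "?enc t0 = []"
    using chain_excludes_c1 less_chain_len[OF n that] t by blast
  have forced: "second_forced c1 (\<not> c2) (?enc t0)" "second_forced c1 (\<not> c2) (?enc t)"
    using second_forced_enc lacks_pair_chain[OF n] by blast+
  from c(3) y' have "prefix (del_second c1 (?enc t0) @ c)
      (del_second c1 (?enc t) @ take 1 (fstar F (trans F (chain n) t) y'))" by simp
  note unshortened = strict_prefix_del_second[OF forced t no_c1 c(2) this]
  with c(1) show "c \<in> Pbar 2 F (chain n) (?enc t0)" unfolding Pbar_2_eq by blast
qed


lemma Pbar_i_s_empty: "Pbar k F i (enc F i s) = {}"
proof -
  have "\<not> strict_prefix (enc F i s) (enc F i t)" for t
    using Pbar_0 unfolding Pbar_eq by auto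
  then show ?thesis unfolding Pbar_eq by auto
qed

lemma hd_Pbar_2_chain_Nil: "n < chain_len \<Longrightarrow> c \<in> Pbar 2 F (chain n) [] \<Longrightarrow> hd c \<noteq> c1"
proof -
  assume n: "n < chain_len" and "c \<in> Pbar 2 F (chain n) []"
  then obtain t y where c: "length c = 2" "strict_prefix [] (enc F (chain n) t)"
    "prefix c (enc F (chain n) t @ fstar F (trans F (chain n) t) y)"
    unfolding Pbar_eq by auto
  from c(2) have t: "enc F (chain n) t \<noteq> []" by auto
  with c have "hd c = hd (enc F (chain n) t)"
    by (cases c; cases "enc F (chain n) t") auto
  then show ?thesis using chain_excludes_c1[OF n t] by simp
qed

lemma Pbar_2_F_short:
  "a < ntab F_short \<Longrightarrow> Pbar 2 F_short a (enc F_short a t) \<subseteq> Pbar 2 F (proj a) (enc F (proj a) t)"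
  by (erule F_short_cases) (use Pbar_2_F_short_orig Pbar_2_F_short_copy in
      \<open>auto simp: enc_F_short_orig proj_orig proj_copy\<close>)

lemma trans_F_short_eq:
  assumes "a < ntab F_short" "\<not> (a = i \<and> t = s)" "a < m \<or> enc F (proj a) t \<noteq> []"
  shows "trans F_short a t = trans F (proj a) t"
  using assms(1)
  by (cases rule: F_short_cases) (use assms in \<open>auto simp: trans_F_short_orig trans_F_short_copy proj_orig proj_copy\<close>)

lemma Pset_2_trans_F_short_subset:
  assumes "a < ntab F_short" "\<not> (a = i \<and> t = s)" "a < m \<or> enc F (proj a) t \<noteq> []"
  shows "Pset 2 F_short (trans F_short a t) [] \<subseteq> Pset 2 F (trans F (proj a) t) []"
  unfolding trans_F_short_eq[OF assms]
  using Pset_2_F_short_orig trans_less proj_less[OF assms(1)] by blast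

lemma two_dec_F_short_prefix:
  assumes a: "a < ntab F_short"
  shows "Pset 2 F_short (trans F_short a t) [] \<inter> Pbar 2 F_short a (enc F_short a t) = {}"
proof (cases "a = i \<and> t = s")
  case True
  then show ?thesis using Pbar_2_F_short[OF a, of t] Pbar_i_s_empty i_less by (simp add: proj_orig)
next
  case not_redirected: False
  have disjoint: "Pset 2 F (trans F (proj a) t) [] \<inter> Pbar 2 F (proj a) (enc F (proj a) t) = {}"
    by (rule Pset_2_trans_disjoint_Pbar[OF proj_less[OF a]])
  show ?thesis
  proof (cases "a < m \<or> enc F (proj a) t \<noteq> []")
    case True
    then show ?thesis
      using disjoint Pset_2_trans_F_short_subset[OF a not_redirected True] Pbar_2_F_short[OF a, of t] by blast
  next
    case False
    obtain n where n: "a = m + n" "n \<le> chain_len" and empty: "enc F (chain n) t = []"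
      using a False by (cases rule: F_short_cases) (auto simp: proj_copy)
    then have n_less: "n < chain_len" using less_chain_len by blast
    have "c \<in> Pset 2 F (trans F (chain n) t) []"
      if "c \<in> Pset 2 F_short (trans F_short a t) []" "c \<in> Pbar 2 F (chain n) []" for c
    proof -
      have "hd c \<noteq> c1" using hd_Pbar_2_chain_Nil[OF n_less that(2)] .
      moreover have "c \<in> Pset 2 F_short (m + Suc n) []"
        using that(1) n empty by (simp add: trans_F_short_copy)
      ultimately show ?thesis
        using Pset_2_F_short_copy[of "Suc n"] n_less trans_chain_empty[OF n_less empty] by simp
    qed
    then show ?thesis
      using disjoint Pbar_2_F_short[OF a, of t] n empty by (auto simp: proj_copy)
  qed
qed

lemma two_dec_F_short_same_codeword:
  assumes a: "a < ntab F_short" and "t \<noteq> t'" and same: "enc F_short a t = enc F_short a t'"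
  shows "Pset 2 F_short (trans F_short a t) [] \<inter> Pset 2 F_short (trans F_short a t') [] = {}"
proof -
  have F_same: "enc F (proj a) t = enc F (proj a) t'"
  proof (cases "a < m")
    case False
    obtain n where n: "a = m + n" "n \<le> chain_len" using a False by (cases rule: F_short_cases) auto
    have forced: "second_forced c1 (\<not> c2) (enc F (chain n) u)" for u
      using second_forced_enc lacks_pair_chain[OF n(2)] by blast
    have "del_second c1 (enc F (chain n) t) = del_second c1 (enc F (chain n) t')"
      using same n by (simp add: enc_F_short_copy)
    then show ?thesis
      using del_second_inj[OF forced forced] n by (simp add: proj_copy)
  qed (use same in \<open>simp add: enc_F_short_orig proj_orig\<close>)
  have ordinary: "\<not> (a = i \<and> u = s)" "a < m \<or> enc F (proj a) u \<noteq> []" if "u \<in> {t, t'}" for u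
  proof -
    show "\<not> (a = i \<and> u = s)"
    proof
      assume "a = i \<and> u = s"
      then have "enc F i t = enc F i s" "enc F i t' = enc F i s"
        using that F_same by (auto simp: proj_orig[OF i_less])
      then show False using enc_i_s_unique \<open>t \<noteq> t'\<close> by blast
    qed
    show "a < m \<or> enc F (proj a) u \<noteq> []"
    proof (cases "a < m")
      case False
      obtain n where "a = m + n" "n \<le> chain_len" using a False by (cases rule: F_short_cases) auto
      then show ?thesis
        using that F_same \<open>t \<noteq> t'\<close> empty_codeword_unique[OF lacks_pair_chain] by (auto simp: proj_copy)
    qed simp
  qed
  show ?thesis
    using Pset_2_trans_disjoint[OF proj_less[OF a] \<open>t \<noteq> t'\<close> F_same]
      Pset_2_trans_F_short_subset[OF a ordinary[of t]] Pset_2_trans_F_short_subset[OF a ordinary[of t']]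
    by blast
qed

lemma two_dec_F_short: "two_dec F_short"
  unfolding two_dec_def using two_dec_F_short_prefix two_dec_F_short_same_codeword by blast

lemma fstar_F_short_nonempty_orig:
  "a < m \<Longrightarrow> fstar F a x \<noteq> [] \<Longrightarrow> \<exists>x'. fstar F_short a x' \<noteq> []"
proof (induction x arbitrary: a)
  case (Cons t y)
  show ?case
  proof (cases "enc F a t = []")
    case False
    then have "fstar F_short a [t] \<noteq> []" using Cons.prems by (simp add: enc_F_short_orig)
    then show ?thesis by blast
  next
    case True
    then have "trans F_short a t = trans F a t"
      using Cons.prems enc_i_s_nonempty by (auto simp: trans_F_short_orig)
    moreover obtain x' where "fstar F_short (trans F a t) x' \<noteq> []"
      using Cons.IH[OF trans_less[OF Cons.prems(1)]] Cons.prems(2) True by auto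
    ultimately have "fstar F_short a (t # x') \<noteq> []"
      using True Cons.prems by (simp add: enc_F_short_orig)
    then show ?thesis by blast
  qed
qed simp

lemma fstar_F_short_nonempty:
  assumes "a < ntab F_short"
  shows "\<exists>x. fstar F_short a x \<noteq> []"
  using assms
proof (cases rule: F_short_cases)
  case 1
  then show ?thesis using ex_fstar_nonempty fstar_F_short_nonempty_orig by blast
next
  case (2 n)
  then obtain t where "enc F (chain n) t \<noteq> []"
    using lacks_pair_ex_nonempty lacks_pair_chain by blast
  then have "fstar F_short a [t] \<noteq> []" using 2 by (simp add: enc_F_short_copy)
  then show ?thesis by blast
qed

lemma ext_F_short: "ext F_short"
  unfolding ext_def
proof (intro allI impI)
  fix a assume "a < ntab F_short"
  then obtain x where x: "fstar F_short a x \<noteq> []" using fstar_F_short_nonempty by blast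
  then have "prefix [hd (fstar F_short a x)] (fstar F_short a x)" by (cases "fstar F_short a x") auto
  then have "[hd (fstar F_short a x)] \<in> Pset 1 F_short a []" by (auto simp: Pset_Nil)
  then show "Pset 1 F_short a [] \<noteq> {}" by blast
qed


subsection \<open>Stationary distribution of the shortened code tuple\<close>

sublocale short: lumping mu F_short F proj
  by unfold_locales (simp_all add: code_tuple_F_short proj_less proj_trans)

definition copies :: "nat \<Rightarrow> nat set" where
  "copies k = {n. n \<le> chain_len \<and> chain n = k}"

lemma sum_fiber:
  assumes k: "k < m"
  shows "(\<Sum>a\<in>short.fiber k. h a) = h k + (\<Sum>n\<in>copies k. h (m + n))"
proof -
  have "short.fiber k = insert k ((+) m ` copies k)"
  proof (intro set_eqI iffI)
    fix a assume "a \<in> short.fiber k"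
    then have a: "a < ntab F_short" "proj a = k" by (auto simp: short.fiber_def)
    then show "a \<in> insert k ((+) m ` copies k)"
      by (cases rule: F_short_cases) (auto simp: proj_orig proj_copy copies_def)
  qed (use k in \<open>auto simp: short.fiber_def copies_def proj_orig proj_copy\<close>)
  moreover have "k \<notin> (+) m ` copies k" using k by auto
  ultimately show ?thesis by (simp add: copies_def sum.reindex)
qed

lemma trans_F_short_into_copy:
  assumes a: "a < ntab F_short" and into: "trans F_short a t = m + n"
  shows "(n = 0 \<and> a = i \<and> t = s) \<or> (\<exists>n'. n = Suc n' \<and> a = m + n' \<and> enc F (chain n') t = [])"
  using a
proof (cases rule: F_short_cases)
  case 1
  show ?thesis
  proof (cases "a = i \<and> t = s")
    case True
    then show ?thesis using into 1 by (simp add: trans_F_short_orig)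
  next
    case False
    then have "trans F_short a t < m" using trans_less[OF 1] by (simp add: trans_F_short_orig[OF 1])
    with into show ?thesis by simp
  qed
next
  case (2 n')
  show ?thesis
  proof (cases "enc F (chain n') t = []")
    case True
    then have "trans F_short a t = m + Suc n'" using 2 by (simp add: trans_F_short_copy)
    with into 2 True show ?thesis by simp
  next
    case False
    then have "trans F_short a t < m"
      using 2 trans_less[OF chain_less[OF 2(2)]] by (simp add: trans_F_short_copy)
    with into show ?thesis by simp
  qed
qed

lemma Qmat_F_short_copy_0: "a < ntab F_short \<Longrightarrow> Qmat mu F_short a m = (if a = i then mu s else 0)"
proof -
  assume a: "a < ntab F_short"
  have "{t. trans F_short a t = m} = (if a = i then {s} else {})"
  proof (intro set_eqI iffI)
    fix t assume "t \<in> {t. trans F_short a t = m}"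
    then have "a = i \<and> t = s" using trans_F_short_into_copy[OF a, of t 0] by simp
    then show "t \<in> (if a = i then {s} else {})" by simp
  next
    fix t assume "t \<in> (if a = i then {s} else {})"
    then have "a = i" "t = s" by (auto split: if_splits)
    then show "t \<in> {t. trans F_short a t = m}" using i_less by (simp add: trans_F_short_orig)
  qed
  then show ?thesis unfolding Qmat_def by simp
qed

definition eps_prob :: "nat \<Rightarrow> real" where
  "eps_prob n = Qmat mu F_short (m + n) (m + Suc n)"

lemma Qmat_F_short_copy_Suc:
  "a < ntab F_short \<Longrightarrow> Qmat mu F_short a (m + Suc n) = (if a = m + n then eps_prob n else 0)"
proof -
  assume a: "a < ntab F_short"
  have source: "a = m + n" if "trans F_short a t = m + Suc n" for t
    using trans_F_short_into_copy[OF a that] by simp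
  show ?thesis
  proof (cases "a = m + n")
    case False
    then have "{t. trans F_short a t = m + Suc n} = {}" using source by blast
    then show ?thesis using False unfolding Qmat_def by simp
  qed (simp add: eps_prob_def)
qed

lemma eps_prob_pos: "n < chain_len \<Longrightarrow> 0 < eps_prob n"
proof -
  assume n: "n < chain_len"
  obtain t where t: "enc F (chain n) t = []" using has_empty_chain[OF n] unfolding has_empty_def by blast
  then have "mu t \<le> eps_prob n"
    using mu_le_Qmat[of mu t F_short "m + n"] mu_nonneg by (simp add: eps_prob_def trans_F_short_copy)
  then show ?thesis using mu_pos[of t] by linarith
qed

lemma inflow_copy_0: "(\<Sum>a<ntab F_short. q a * Qmat mu F_short a m) = q i * mu s"
proof -
  have "(\<Sum>a<ntab F_short. q a * Qmat mu F_short a m) = (\<Sum>a<ntab F_short. if a = i then q a * mu s else 0)"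
    by (rule sum.cong) (simp_all add: Qmat_F_short_copy_0)
  then show ?thesis using i_less by simp
qed

lemma inflow_copy_Suc:
  "n < chain_len \<Longrightarrow> (\<Sum>a<ntab F_short. q a * Qmat mu F_short a (m + Suc n)) = q (m + n) * eps_prob n"
proof -
  assume n: "n < chain_len"
  have "(\<Sum>a<ntab F_short. q a * Qmat mu F_short a (m + Suc n))
      = (\<Sum>a<ntab F_short. if a = m + n then q a * eps_prob n else 0)"
    by (rule sum.cong) (simp_all add: Qmat_F_short_copy_Suc del: add_Suc_right)
  then show ?thesis using n by simp
qed

definition weight :: "nat \<Rightarrow> real" where
  "weight n = mu s * (\<Prod>l<n. eps_prob l)"

lemma weight_0: "weight 0 = mu s"
  by (simp add: weight_def)

lemma weight_Suc: "weight (Suc n) = weight n * eps_prob n"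
  by (simp add: weight_def)

lemma weight_nonneg: "0 \<le> weight n"
  unfolding weight_def eps_prob_def
  using mu_nonneg Qmat_nonneg[of mu, OF mu_nonneg] by (simp add: prod_nonneg)

lemma weight_pos: "n \<le> chain_len \<Longrightarrow> 0 < weight n"
  unfolding weight_def using mu_pos[of s] eps_prob_pos by (auto intro!: mult_pos_pos prod_pos)

abbreviation \<pi> :: "nat \<Rightarrow> real" where
  "\<pi> \<equiv> stat_dist mu F"

lemma stationary_\<pi>: "stationary mu F \<pi>"
  using reg by (rule stationary_stat_dist)

lemma \<pi>_i_pos: "0 < \<pi> i"
  using stationary_pos_Rset[OF code_tuple mu_pos stationary_\<pi>
      stat_dist_nonneg[OF code_tuple mu_nonneg mu_sum reg] i_Rset] .

text \<open>The mass \<pi> i is shared by table i and its copies, the copy at position n of the chain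
  receiving weight n times the mass of table i.\<close>

definition base :: real where
  "base = \<pi> i / (1 + (\<Sum>n\<in>copies i. weight n))"

definition q_short :: "nat \<Rightarrow> real" where
  "q_short a = (if a < m then \<pi> a - base * (\<Sum>n\<in>copies a. weight n)
     else if a < ntab F_short then base * weight (a - m) else 0)"

lemma total_weight_pos: "0 < 1 + (\<Sum>n\<in>copies k. weight n)"
  using weight_nonneg by (simp add: add_pos_nonneg sum_nonneg)

lemma \<pi>_i_eq: "\<pi> i = base * (1 + (\<Sum>n\<in>copies i. weight n))"
  using total_weight_pos[of i] unfolding base_def by simp

lemma base_pos: "0 < base"
  using \<pi>_i_pos total_weight_pos[of i] unfolding base_def by simp

lemma q_short_copy: "n \<le> chain_len \<Longrightarrow> q_short (m + n) = base * weight n"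
  by (simp add: q_short_def)

lemma q_short_i: "q_short i = base"
  using \<pi>_i_eq i_less by (simp add: q_short_def algebra_simps)

lemma push_q_short: "short.push q_short = \<pi>"
proof
  fix k show "short.push q_short k = \<pi> k"
  proof (cases "k < m")
    case True
    have "(\<Sum>n\<in>copies k. q_short (m + n)) = base * (\<Sum>n\<in>copies k. weight n)"
      by (simp add: sum_distrib_left copies_def q_short_copy)
    then show ?thesis using True by (simp add: short.push_def sum_fiber q_short_def)
  qed (use stationary_\<pi> in \<open>simp add: short.push_def stationary_def\<close>)
qed

lemma stationary_q_short: "stationary mu F_short q_short"
proof (rule short.stationary_lift[where rep = id])
  show "stationary mu F (short.push q_short)"
    unfolding push_q_short by (rule stationary_\<pi>)
  show "id k \<in> short.fiber k" if "k < m" for k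
    using that by (simp add: short.fiber_def proj_orig)
  show "(\<Sum>a<ntab F_short. q_short a * Qmat mu F_short a b) = q_short b"
    if b_less: "b < ntab F_short" and b_copy: "b \<noteq> id (proj b)" for b
  proof -
    obtain n where b: "b = m + n" "n \<le> chain_len"
      using b_less b_copy by (cases rule: F_short_cases) (auto simp: proj_orig)
    show ?thesis
    proof (cases n)
      case 0
      have "(\<Sum>a<ntab F_short. q_short a * Qmat mu F_short a m) = q_short i * mu s"
        by (rule inflow_copy_0)
      also have "\<dots> = q_short m"
        using q_short_copy[of 0] by (simp add: q_short_i weight_0)
      finally show ?thesis using b 0 by simp
    next
      case (Suc n')
      then have n': "n' < chain_len" using b by simp
      have "(\<Sum>a<ntab F_short. q_short a * Qmat mu F_short a (m + Suc n')) = q_short (m + n') * eps_prob n'"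
        by (rule inflow_copy_Suc[OF n'])
      also have "\<dots> = q_short (m + Suc n')"
        using n' by (simp add: q_short_copy weight_Suc del: add_Suc_right)
      finally show ?thesis using b Suc by simp
    qed
  qed
qed (simp add: q_short_def)

lemma stationary_F_short_copy:
  assumes q: "stationary mu F_short q"
  shows "n \<le> chain_len \<Longrightarrow> q (m + n) = q i * weight n"
proof (induction n)
  case 0
  have "q m = (\<Sum>a<ntab F_short. q a * Qmat mu F_short a m)"
    using q unfolding stationary_def by simp
  also have "\<dots> = q i * weight 0"
    by (simp only: inflow_copy_0 weight_0)
  finally show ?case by simp
next
  case (Suc n)
  then have n: "n < chain_len" by simp
  have "q (m + Suc n) = (\<Sum>a<ntab F_short. q a * Qmat mu F_short a (m + Suc n))"
    using q Suc.prems unfolding stationary_def by (simp del: add_Suc_right)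
  also have "\<dots> = q (m + n) * eps_prob n"
    by (rule inflow_copy_Suc[OF n])
  finally show ?case using Suc n by (simp add: weight_Suc)
qed

lemma stationary_F_short_unique:
  assumes q: "stationary mu F_short q"
  shows "q = q_short"
proof -
  have push: "\<pi> = short.push q"
    by (rule stat_dist_unique[OF reg short.stationary_push[OF q]])
  have fiber: "\<pi> k = q k + q i * (\<Sum>n\<in>copies k. weight n)" if "k < m" for k
  proof -
    have "(\<Sum>n\<in>copies k. q (m + n)) = q i * (\<Sum>n\<in>copies k. weight n)"
      using stationary_F_short_copy[OF q] by (simp add: sum_distrib_left copies_def)
    then show ?thesis using that push by (simp add: short.push_def sum_fiber)
  qed
  have "q i * (1 + (\<Sum>n\<in>copies i. weight n)) = base * (1 + (\<Sum>n\<in>copies i. weight n))"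
    using fiber[OF i_less] \<pi>_i_eq by (simp add: algebra_simps)
  with total_weight_pos[of i] have q_i: "q i = base" by simp
  show ?thesis
  proof
    fix a
    show "q a = q_short a"
    proof (cases "a < ntab F_short")
      case True
      then show ?thesis
      proof (cases rule: F_short_cases)
        case 1
        then show ?thesis using fiber[OF 1] q_i by (simp add: q_short_def)
      next
        case (2 n)
        then show ?thesis using stationary_F_short_copy[OF q] q_i q_short_copy by simp
      qed
    qed (use q in \<open>simp add: stationary_def q_short_def\<close>)
  qed
qed

lemma reg_F_short: "reg mu F_short"
  unfolding reg_def using stationary_q_short stationary_F_short_unique by blast

lemma stat_dist_F_short: "stat_dist mu F_short = q_short"
  by (rule stat_dist_unique[OF reg_F_short stationary_q_short])

lemma table_len_F_short_le:
  assumes "a < ntab F_short"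
  shows "table_len mu F_short a \<le> table_len mu F (proj a)"
proof -
  have "length (enc F_short a t) \<le> length (enc F (proj a) t)" for t
    using assms by (simp add: enc_F_short length_del_second_le)
  then show ?thesis
    unfolding table_len_def using mu_nonneg by (intro sum_mono mult_right_mono) auto
qed

lemma table_len_F_short_less: "table_len mu F_short (m + chain_len) < table_len mu F (chain chain_len)"
proof -
  obtain t0 g where t0: "enc F (chain chain_len) t0 = c1 # g" "g \<noteq> []"
    using chain_len_shortenable by blast
  have le: "real (length (enc F_short (m + chain_len) t)) * mu t \<le> real (length (enc F (chain chain_len) t)) * mu t" for t
    using length_del_second_le[of c1 "enc F (chain chain_len) t"] mu_nonneg[of t]
    by (simp add: enc_F_short_copy mult_right_mono)
  have "real (length (enc F_short (m + chain_len) t0)) * mu t0 < real (length (enc F (chain chain_len) t0)) * mu t0"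
    using length_del_second_less[OF t0(2), of c1] t0(1) mu_pos[of t0] by (simp add: enc_F_short_copy)
  then show ?thesis unfolding table_len_def using le by (intro sum_strict_mono_ex1) auto
qed

lemma avg_len_F_short_less: "avg_len mu F_short < avg_len mu F"
proof (rule short.avg_len_less)
  show "0 \<le> stat_dist mu F_short a" for a
    by (rule stat_dist_nonneg[OF code_tuple_F_short mu_nonneg mu_sum reg_F_short])
  show "0 < stat_dist mu F_short (m + chain_len)"
    using base_pos weight_pos[of chain_len] by (simp add: stat_dist_F_short q_short_copy)
  show "table_len mu F_short (m + chain_len) < table_len mu F (proj (m + chain_len))"
    using table_len_F_short_less by (simp add: proj_copy)
qed (simp_all add: reg reg_F_short table_len_F_short_le)

lemma not_Fopt: "\<not> Fopt mu F"
proof -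
  have "F0 mu F_short"
    unfolding F0_def using code_tuple_F_short reg_F_short ext_F_short two_dec_F_short by blast
  then show ?thesis using avg_len_F_short_less unfolding Fopt_def by (meson not_le)
qed

end

lemma card_Pset_2_full:
  assumes "\<And>c1 c2. [c1, c2] \<in> Pset 2 F a []"
  shows "card (Pset 2 F a []) = 4"
proof -
  have "c \<in> {[False, False], [False, True], [True, False], [True, True]}" if "length c = 2" for c :: "bool list"
    using that by (cases c rule: list.exhaust[case_product list.exhaust, of _ "tl c"])
      (auto simp: numeral_2_eq_2 length_Suc_conv)
  then have "Pset 2 F a [] = {[False, False], [False, True], [True, False], [True, True]}"
    using assms unfolding Pset_def by blast
  then show ?thesis by simp
qed

theorem lemma15:
  fixes mu :: "'s::finite \<Rightarrow> real" and F :: "'s code_tuple" and i :: nat and s :: 's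
  assumes "card (UNIV :: 's set) \<ge> 2"
    and "\<forall>x. 0 < mu x \<and> mu x \<le> 1" and "(\<Sum>x\<in>UNIV. mu x) = 1"
    and "Fopt mu F" and "F1 mu F"
    and "i \<in> Rset F"
    and "Pbar 0 F i (enc F i s) = {}"
    and "card (Sset F i (enc F i s)) = 1"
  shows "card (Pset 2 F (trans F i s) []) = 4"
proof (rule card_Pset_2_full)
  fix c1 c2
  show "[c1, c2] \<in> Pset 2 F (trans F i s) []"
  proof (rule ccontr)
    assume "[c1, c2] \<notin> Pset 2 F (trans F i s) []"
    with assms interpret missing_pair mu F i s c1 c2
      by unfold_locales (auto simp: Fopt_def F0_def F1_def)
    show False using not_Fopt \<open>Fopt mu F\<close> by contradiction
  qed
qed

end
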